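(* Let $\Omega=\{\Omega_1,\dots,\Omega_N\}$ be a finite set of points with distance function $d$, let $1\le n<N$, and let $i,j\in\{1,\dots,n\}$. Let $x_1=MMJ(\Omega_i,\Omega_j~|~\Omega_{[1,n]})$, $t_1=MMJ(\Omega_{n+1},\Omega_i~|~\Omega_{[1,n+1]})$, $t_2=MMJ(\Omega_{n+1},\Omega_j~|~\Omega_{[1,n+1]})$ and $x_2=\max(t_1,t_2)$. Then $MMJ(\Omega_i,\Omega_j~|~\Omega_{[1,n+1]})=\min(x_1,x_2)$.
   Context: $\Omega$ is a finite set of points indexed $\Omega_1,\dots,\Omega_N$, and $\Omega_{[1,n]}=\{\Omega_1,\dots,\Omega_n\}$. $d:\Omega\times\Omega\to[0,\infty)$ is a distance function (e.g. Euclidean distance), symmetric with $d(x,x)=0$. For a subset $S\subseteq\Omega$, a path from $i$ to $j$ in $S$ is a finite sequence of points of $S$ (at least two) starting at $i$ and ending at $j$, with no repeated points except that start and end may coincide when $i=j$. A jump of a path is the distance $d(x,y)$ between two consecutive points $x,y$, and $max\_jump$ of a path is its largest jump. The Min-Max-Jump distance with context $S$ is $MMJ(i,j~|~S)=\min\{max\_jump(\epsilon): \epsilon \text{ a path from } i \text{ to } j \text{ in } S\}$ for $i,j\in S$, with $MMJ(i,i~|~S)=0$. *)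

theory Defs
  imports Complex_Main
begin

definition is_path :: "'a set \<Rightarrow> 'a \<Rightarrow> 'a \<Rightarrow> 'a list \<Rightarrow> bool" where
  "is_path S i j xs \<longleftrightarrow> length xs \<ge> 2 \<and> set xs \<subseteq> S \<and> hd xs = i \<and> last xs = j
     \<and> distinct (tl xs) \<and> distinct (butlast xs)"

definition max_jump :: "('a \<Rightarrow> 'a \<Rightarrow> real) \<Rightarrow> 'a list \<Rightarrow> real" where
  "max_jump d xs = Max (set (map2 d (butlast xs) (tl xs)))"

definition MMJ :: "('a \<Rightarrow> 'a \<Rightarrow> real) \<Rightarrow> 'a \<Rightarrow> 'a \<Rightarrow> 'a set \<Rightarrow> real" where
  "MMJ d i j S = (if i = j then 0 else Min {max_jump d xs | xs. is_path S i j xs})"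

end

theory Submission
  imports Defs "HOL-Library.Transitive_Closure_Table"
begin

(* For t \<ge> 0, MMJ(a, b | S) \<le> t says exactly that a and b are connected in the graph on S
   whose edges are the pairs at distance at most t: a path of max jump \<le> t is a chain of such
   edges, and conversely every chain can be shortened to one without repeated points.
   After adding a point p, a chain from a to b either avoids p, or passes through p and splits
   into chains a -- p and p -- b.  So MMJ(a, b | S \<union> {p}) \<le> t iff MMJ(a, b | S) \<le> t or
   both MMJ(p, a | S \<union> {p}) \<le> t and MMJ(p, b | S \<union> {p}) \<le> t, i.e. iff
   min x\<^sub>1 x\<^sub>2 \<le> t.  Two nonnegative reals with the same upper bounds in [0, \<infinity>) coincide. *)

definition jump_le :: "('a \<Rightarrow> 'a \<Rightarrow> real) \<Rightarrow> 'a set \<Rightarrow> real \<Rightarrow> 'a \<Rightarrow> 'a \<Rightarrow> bool" where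
  "jump_le d S t x y \<longleftrightarrow> x \<in> S \<and> y \<in> S \<and> d x y \<le> t"

lemma rtrancl_path_jump_le_iff:
  assumes "x \<in> S"
  shows "rtrancl_path (jump_le d S t) x xs y \<longleftrightarrow>
    set xs \<subseteq> S \<and> last (x # xs) = y \<and> (\<forall>v \<in> set (map2 d (butlast (x # xs)) xs). v \<le> t)"
  using assms
proof (induction xs arbitrary: x)
  case Nil
  then show ?case by (auto elim: rtrancl_path.cases intro: rtrancl_path.intros)
next
  case (Cons z zs)
  have step: "rtrancl_path (jump_le d S t) x (z # zs) y \<longleftrightarrow>
      jump_le d S t x z \<and> rtrancl_path (jump_le d S t) z zs y"
    by (auto elim: rtrancl_path.cases intro: rtrancl_path.intros)
  have jump: "jump_le d S t x z \<longleftrightarrow> z \<in> S \<and> d x z \<le> t"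
    using Cons.prems by (simp add: jump_le_def)
  show ?case
    unfolding step jump by (cases "z \<in> S") (auto simp: Cons.IH)
qed

lemma max_jump_le_iff_rtrancl_path:
  assumes "x \<in> S" "set xs \<subseteq> S" "xs \<noteq> []"
  shows "max_jump d (x # xs) \<le> t \<longleftrightarrow> rtrancl_path (jump_le d S t) x xs (last xs)"
  using assms by (simp add: max_jump_def rtrancl_path_jump_le_iff)

lemma finite_paths:
  assumes "finite S"
  shows "finite {xs. is_path S a b xs}"
proof (rule finite_subset)
  show "{xs. is_path S a b xs} \<subseteq> {xs. set xs \<subseteq> S \<and> length xs \<le> Suc (card S)}"
  proof safe
    fix xs assume path: "is_path S a b xs"
    have "set (tl xs) \<subseteq> set xs" by (cases xs) auto
    with path have "length (tl xs) = card (set (tl xs))" "set (tl xs) \<subseteq> S"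
      by (auto simp: is_path_def distinct_card)
    with assms have "length (tl xs) \<le> card S" by (metis card_mono)
    then show "length xs \<le> Suc (card S)" by simp
  qed (auto simp: is_path_def)
  show "finite {xs. set xs \<subseteq> S \<and> length xs \<le> Suc (card S)}"
    using assms by (rule finite_lists_length_le)
qed

lemma MMJ_attained:
  assumes "finite S" "a \<in> S" "b \<in> S" "a \<noteq> b"
  obtains xs where "is_path S a b xs" "MMJ d a b S = max_jump d xs"
    "\<And>ys. is_path S a b ys \<Longrightarrow> MMJ d a b S \<le> max_jump d ys"
proof -
  let ?J = "max_jump d ` {xs. is_path S a b xs}"
  have "is_path S a b [a, b]" using assms(2,3) by (simp add: is_path_def)
  then have "?J \<noteq> {}" by blast
  moreover have "finite ?J" using finite_paths[OF assms(1)] by simp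
  moreover have "MMJ d a b S = Min ?J" using assms(4) by (simp add: MMJ_def setcompr_eq_image)
  ultimately have "MMJ d a b S \<in> ?J" "\<forall>j \<in> ?J. MMJ d a b S \<le> j" by simp_all
  with that show thesis by blast
qed

lemma MMJ_le_iff_rtranclp:
  assumes "finite S" "a \<in> S" "b \<in> S" "0 \<le> t"
  shows "MMJ d a b S \<le> t \<longleftrightarrow> (jump_le d S t)\<^sup>*\<^sup>* a b"
proof (cases "a = b")
  case True
  with assms(4) show ?thesis by (simp add: MMJ_def)
next
  case False
  have "MMJ d a b S \<le> t \<longleftrightarrow> (\<exists>xs. is_path S a b xs \<and> max_jump d xs \<le> t)"
    using MMJ_attained[OF assms(1-3) False] by (metis order_trans)
  also have "\<dots> \<longleftrightarrow> (\<exists>xs. rtrancl_path (jump_le d S t) a xs b)"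
  proof
    assume "\<exists>xs. is_path S a b xs \<and> max_jump d xs \<le> t"
    then obtain x xs where path: "is_path S a b (x # xs)" and "max_jump d (x # xs) \<le> t"
      by (metis list.exhaust list.size(3) is_path_def not_numeral_le_zero)
    moreover from path have "x = a" "xs \<noteq> []" "set xs \<subseteq> S" "last xs = b"
      by (auto simp: is_path_def)
    ultimately show "\<exists>xs. rtrancl_path (jump_le d S t) a xs b"
      using assms(2) max_jump_le_iff_rtrancl_path by metis
  next
    assume "\<exists>xs. rtrancl_path (jump_le d S t) a xs b"
    then obtain xs where xs: "rtrancl_path (jump_le d S t) a xs b" and "distinct (a # xs)"
      by (metis rtrancl_path_distinct)
    moreover from xs False have "xs \<noteq> []" by (auto elim: rtrancl_path.cases)
    moreover from xs assms(2) have "set xs \<subseteq> S" "last (a # xs) = b"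
      by (simp_all add: rtrancl_path_jump_le_iff)
    ultimately have "is_path S a b (a # xs)" "max_jump d (a # xs) \<le> t"
      using assms(2)
      by (auto simp: is_path_def Suc_le_eq distinct_butlast max_jump_le_iff_rtrancl_path
          dest: in_set_butlastD)
    then show "\<exists>xs. is_path S a b xs \<and> max_jump d xs \<le> t" by blast
  qed
  also have "\<dots> \<longleftrightarrow> (jump_le d S t)\<^sup>*\<^sup>* a b"
    by (simp add: rtranclp_eq_rtrancl_path)
  finally show ?thesis .
qed

lemma MMJ_nonneg:
  assumes "\<And>x y. 0 \<le> d x y" "finite S" "a \<in> S" "b \<in> S"
  shows "0 \<le> MMJ d a b S"
proof (cases "a = b")
  case True
  then show ?thesis by (simp add: MMJ_def)
next
  case False
  then obtain xs where path: "is_path S a b xs" and MMJ: "MMJ d a b S = max_jump d xs"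
    using MMJ_attained[OF assms(2-4)] by blast
  from path obtain x y ys where "xs = x # y # ys"
    unfolding is_path_def by (auto simp: numeral_2_eq_2 Suc_le_length_iff)
  with assms(1) show ?thesis by (auto simp: MMJ max_jump_def Max_ge_iff)
qed

lemma rtranclp_jump_le_mono:
  assumes "S \<subseteq> T" "(jump_le d S t)\<^sup>*\<^sup>* a b"
  shows "(jump_le d T t)\<^sup>*\<^sup>* a b"
proof -
  have "jump_le d S t \<le> jump_le d T t" using assms(1) by (auto simp: jump_le_def)
  with assms(2) show ?thesis by (blast dest: rtranclp_mono)
qed

lemma rtranclp_jump_le_sym:
  assumes "\<And>x y. d x y = d y x" "(jump_le d S t)\<^sup>*\<^sup>* a b"
  shows "(jump_le d S t)\<^sup>*\<^sup>* b a"
proof -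
  have "symp (jump_le d S t)" using assms(1) by (auto simp: symp_def jump_le_def)
  with assms(2) show ?thesis by (blast dest: sympD[OF symp_rtranclp])
qed

lemma rtranclp_jump_le_insert_iff:
  "(jump_le d (insert p S) t)\<^sup>*\<^sup>* a b \<longleftrightarrow>
    (jump_le d S t)\<^sup>*\<^sup>* a b \<or>
    (jump_le d (insert p S) t)\<^sup>*\<^sup>* a p \<and> (jump_le d (insert p S) t)\<^sup>*\<^sup>* p b"
  (is "?r\<^sup>*\<^sup>* a b \<longleftrightarrow> _")
proof
  show "?r\<^sup>*\<^sup>* a b \<Longrightarrow> (jump_le d S t)\<^sup>*\<^sup>* a b \<or> ?r\<^sup>*\<^sup>* a p \<and> ?r\<^sup>*\<^sup>* p b"
  proof (induction rule: rtranclp_induct)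
    case base
    then show ?case by simp
  next
    case (step y z)
    note mono = rtranclp_jump_le_mono[OF subset_insertI]
    from step.IH show ?case
    proof
      assume ay: "(jump_le d S t)\<^sup>*\<^sup>* a y"
      consider "y = p" | "z = p" | "jump_le d S t y z"
        using step.hyps(2) by (auto simp: jump_le_def)
      then show ?case
      proof cases
        case 1
        with ay step.hyps(2) show ?thesis by (auto dest: mono)
      next
        case 2
        with ay step.hyps(2) show ?thesis by (auto dest: mono intro: rtranclp.rtrancl_into_rtrancl)
      next
        case 3
        with ay show ?thesis by (auto intro: rtranclp.rtrancl_into_rtrancl)
      qed
    next
      assume "?r\<^sup>*\<^sup>* a p \<and> ?r\<^sup>*\<^sup>* p y"
      with step.hyps(2) show ?case by (auto intro: rtranclp.rtrancl_into_rtrancl)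
    qed
  qed
  show "(jump_le d S t)\<^sup>*\<^sup>* a b \<or> ?r\<^sup>*\<^sup>* a p \<and> ?r\<^sup>*\<^sup>* p b \<Longrightarrow> ?r\<^sup>*\<^sup>* a b"
    by (auto intro: rtranclp_jump_le_mono[OF subset_insertI] rtranclp_trans)
qed

lemma MMJ_insert:
  assumes nonneg: "\<And>x y. 0 \<le> d x y" and sym: "\<And>x y. d x y = d y x"
    and S: "finite S" "a \<in> S" "b \<in> S"
  shows "MMJ d a b (insert p S) =
    min (MMJ d a b S) (max (MMJ d p a (insert p S)) (MMJ d p b (insert p S)))"
    (is "?lhs = ?rhs")
proof -
  let ?T = "insert p S"
  have T: "finite ?T" "a \<in> ?T" "b \<in> ?T" "p \<in> ?T" using S by simp_all
  have same_bounds: "?lhs \<le> t \<longleftrightarrow> ?rhs \<le> t" if "0 \<le> t" for t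
  proof -
    have "?lhs \<le> t \<longleftrightarrow> (jump_le d ?T t)\<^sup>*\<^sup>* a b"
      using MMJ_le_iff_rtranclp[OF T(1-3) that] .
    also have "\<dots> \<longleftrightarrow> (jump_le d S t)\<^sup>*\<^sup>* a b \<or>
        (jump_le d ?T t)\<^sup>*\<^sup>* p a \<and> (jump_le d ?T t)\<^sup>*\<^sup>* p b"
      using rtranclp_jump_le_insert_iff[of d p S t a b]
        rtranclp_jump_le_sym[of d ?T t a p] rtranclp_jump_le_sym[of d ?T t p a] sym
      by blast
    also have "\<dots> \<longleftrightarrow> MMJ d a b S \<le> t \<or> MMJ d p a ?T \<le> t \<and> MMJ d p b ?T \<le> t"
      using MMJ_le_iff_rtranclp[OF S that] MMJ_le_iff_rtranclp[OF T(1,4,2) that]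
        MMJ_le_iff_rtranclp[OF T(1,4,3) that]
      by simp
    also have "\<dots> \<longleftrightarrow> ?rhs \<le> t" by (simp add: min_le_iff_disj)
    finally show ?thesis .
  qed
  have "0 \<le> ?lhs" "0 \<le> ?rhs"
    using S T MMJ_nonneg[of d, OF nonneg] by (simp_all add: le_max_iff_disj)
  then show ?thesis
    using same_bounds[of ?lhs] same_bounds[of ?rhs] by (metis order.antisym order.refl)
qed

theorem theorem3p5:
  fixes \<Omega> :: "nat \<Rightarrow> 'a" and d :: "'a \<Rightarrow> 'a \<Rightarrow> real" and N n i j :: nat
  assumes inj: "inj_on \<Omega> {1..N}"
    and d_nonneg: "\<And>x y. d x y \<ge> 0"
    and d_sym: "\<And>x y. d x y = d y x"
    and d_refl: "\<And>x. d x x = 0"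
    and n: "1 \<le> n" "n < N"
    and i: "i \<in> {1..n}" and j: "j \<in> {1..n}"
  shows "MMJ d (\<Omega> i) (\<Omega> j) (\<Omega> ` {1..n+1}) =
     min (MMJ d (\<Omega> i) (\<Omega> j) (\<Omega> ` {1..n}))
         (max (MMJ d (\<Omega> (n+1)) (\<Omega> i) (\<Omega> ` {1..n+1}))
              (MMJ d (\<Omega> (n+1)) (\<Omega> j) (\<Omega> ` {1..n+1})))"
proof -
  have "\<Omega> ` {1..n+1} = insert (\<Omega> (n+1)) (\<Omega> ` {1..n})"
    by (simp add: atLeastAtMostSuc_conv)
  then show ?thesis
    using MMJ_insert[of d "\<Omega> ` {1..n}" "\<Omega> i" "\<Omega> j" "\<Omega> (n+1)"] d_nonneg d_sym i j by simp
qed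

end
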